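(* Let $H$ be a finite simple undirected graph on $n\ge 2$ vertices, and let $\lambda_1(H)\ge\cdots\ge\lambda_n(H)$ be the eigenvalues of its adjacency matrix. Then \[ \lambda_{n-1}(H)\ge -\frac{n}{3}. \] *)

theory Defs
  imports "Jordan_Normal_Form.Char_Poly"
begin

text \<open>A finite simple undirected graph on vertex set {0..<n}: symmetric, irreflexive
  adjacency relation E (values outside {0..<n} are irrelevant).\<close>
definition simple_graph :: "nat \<Rightarrow> (nat \<Rightarrow> nat \<Rightarrow> bool) \<Rightarrow> bool" where
  "simple_graph n E \<longleftrightarrow> (\<forall>i<n. \<forall>j<n. E i j \<longleftrightarrow> E j i) \<and> (\<forall>i<n. \<not> E i i)"

definition adj_matrix :: "nat \<Rightarrow> (nat \<Rightarrow> nat \<Rightarrow> bool) \<Rightarrow> real mat" where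
  "adj_matrix n E = mat n n (\<lambda>(i, j). if E i j then 1 else 0)"

text \<open>es lists the eigenvalues of A (with algebraic multiplicity) in non-increasing order:
  es ! 0 \<ge> es ! 1 \<ge> ... , i.e. es ! (k-1) = lambda_k.\<close>
definition ordered_eigenvalues :: "real mat \<Rightarrow> real list \<Rightarrow> bool" where
  "ordered_eigenvalues A es \<longleftrightarrow>
     length es = dim_row A \<and> sorted_wrt (\<ge>) es \<and>
     char_poly A = (\<Prod>e\<leftarrow>es. [:- e, 1:])"

end

theory Submission
  imports Defs "Jordan_Normal_Form.Schur_Decomposition"
begin

text \<open>
  A Schur triangularisation of the adjacency matrix A, with the two smallest eigenvalues
  lambda_n <= lambda_(n-1) first on the diagonal, yields orthonormal x, y with x'Ax = lambda_n and
  y'Ay = lambda_(n-1). Put t_ij = x_i x_j + y_i y_j. Since the entries of A lie in [0,1],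
  A_ij t_ij >= (t_ij - |t_ij|)/2, and sum t_ij = (sum x_i)^2 + (sum y_i)^2 >= 0, so it suffices
  to show sum |t_ij| <= 4n/3.

  With w_j = x_j + i y_j we have t_ij = Re (w_i cnj w_j), sum w_j^2 = 0 and sum |w_j|^2 = 2.
  The inequality |cos u| <= 2/3 + 7/18 cos 2u - 1/18 cos 4u, applied to the angle of w_i cnj w_j,
  bounds |t_ij| by a combination of positive semidefinite kernels, whence
  sum |t_ij| <= 2/3 R^2 + 7/18 |S|^2 with R = sum |w_j| and S = sum w_j^2/|w_j|. Finally
  sum w_j^2 = 0 and a weighted Cauchy-Schwarz inequality give R^2 + |S|^2 <= 2n. Hence
  lambda_n + lambda_(n-1) >= -2n/3, and therefore lambda_(n-1) >= -n/3.
\<close>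

lemma weighted_square_sum_le:
  fixes c v :: "'a \<Rightarrow> real"
  assumes "\<And>i. i \<in> I \<Longrightarrow> 0 \<le> c i"
  shows "(\<Sum>i\<in>I. c i * v i)\<^sup>2 \<le> (\<Sum>i\<in>I. c i) * (\<Sum>i\<in>I. c i * (v i)\<^sup>2)"
proof -
  have "0 \<le> (\<Sum>i\<in>I. \<Sum>j\<in>I. c i * c j * (v i - v j)\<^sup>2)"
    using assms by (intro sum_nonneg) auto
  also have "\<dots> = (\<Sum>i\<in>I. \<Sum>j\<in>I.
      (c i * (v i)\<^sup>2) * c j + c i * (c j * (v j)\<^sup>2) - 2 * ((c i * v i) * (c j * v j)))"
    by (intro sum.cong refl) (simp add: power2_eq_square algebra_simps)
  also have "\<dots> = (\<Sum>i\<in>I. \<Sum>j\<in>I. (c i * (v i)\<^sup>2) * c j)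
       + (\<Sum>i\<in>I. \<Sum>j\<in>I. c i * (c j * (v j)\<^sup>2))
       - 2 * (\<Sum>i\<in>I. \<Sum>j\<in>I. (c i * v i) * (c j * v j))"
    by (simp only: sum.distrib sum_subtractf sum_distrib_left)
  also have "\<dots> = 2 * ((\<Sum>i\<in>I. c i) * (\<Sum>i\<in>I. c i * (v i)\<^sup>2) - (\<Sum>i\<in>I. c i * v i)\<^sup>2)"
    by (simp only: sum_product[symmetric] power2_eq_square) (simp add: algebra_simps)
  finally show ?thesis by simp
qed

lemma sum_square_add_sum_square_le:
  fixes u p :: "'a \<Rightarrow> real"
  assumes "\<And>i. i \<in> I \<Longrightarrow> \<bar>p i\<bar> \<le> 1" and "(\<Sum>i\<in>I. (u i)\<^sup>2 * p i) = 0"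
  shows "(\<Sum>i\<in>I. u i)\<^sup>2 + (\<Sum>i\<in>I. u i * p i)\<^sup>2 \<le> card I * (\<Sum>i\<in>I. (u i)\<^sup>2)"
proof -
  define Q where "Q = (\<Sum>i\<in>I. (u i)\<^sup>2)"
  define P where "P = (\<Sum>i\<in>I. p i)"
  have plus: "(\<Sum>i\<in>I. u i + u i * p i)\<^sup>2 \<le> (card I + P) * Q"
    using weighted_square_sum_le[of I "\<lambda>i. 1 + p i" u] assms
    by (force simp: P_def Q_def algebra_simps sum.distrib abs_le_iff)
  have minus: "(\<Sum>i\<in>I. u i - u i * p i)\<^sup>2 \<le> (card I - P) * Q"
    using weighted_square_sum_le[of I "\<lambda>i. 1 - p i" u] assms
    by (force simp: P_def Q_def algebra_simps sum_subtractf abs_le_iff)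
  have "2 * ((\<Sum>i\<in>I. u i)\<^sup>2 + (\<Sum>i\<in>I. u i * p i)\<^sup>2)
      = (\<Sum>i\<in>I. u i + u i * p i)\<^sup>2 + (\<Sum>i\<in>I. u i - u i * p i)\<^sup>2"
    by (simp add: sum.distrib sum_subtractf power2_eq_square algebra_simps)
  also have "\<dots> \<le> 2 * (card I * Q)"
    using plus minus by (simp add: algebra_simps)
  finally show ?thesis by (simp add: Q_def)
qed

lemma abs_Re_le_trigonometric_majorant:
  fixes z :: complex
  shows "\<bar>Re z\<bar> \<le> 2/3 * cmod z + 7/18 * Re (z\<^sup>2) / cmod z - 1/18 * Re (z ^ 4) / cmod z ^ 3"
proof (cases "z = 0")
  case False
  obtain p q where z: "z = Complex p q" by (cases z)
  define \<rho> where "\<rho> = cmod z"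
  define P where "P = \<bar>p\<bar>"
  have \<rho>_pos: "0 < \<rho>" using False by (simp add: \<rho>_def)
  have \<rho>2: "\<rho>\<^sup>2 = p\<^sup>2 + q\<^sup>2" by (simp add: \<rho>_def z cmod_def)
  have P2: "P\<^sup>2 = p\<^sup>2" by (simp add: P_def)
  have P_le: "P \<le> \<rho>" using abs_Re_le_cmod[of z] by (simp add: P_def \<rho>_def z)
  (* With c = P / rho = |cos (arg z)| the claim is equivalent to (c - 1) (2c - 1)^2 (c + 2) <= 0. *)
  have "(P - \<rho>) * (2 * P - \<rho>)\<^sup>2 * (P + 2 * \<rho>) \<le> 0"
    using P_le \<rho>_pos by (intro mult_nonpos_nonneg) (auto simp: P_def)
  then have "18 * P * \<rho> ^ 3 \<le> 4 * \<rho> ^ 4 + 22 * P\<^sup>2 * \<rho>\<^sup>2 - 8 * P ^ 4"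
    by (simp add: power2_eq_square power3_eq_cube power4_eq_xxxx algebra_simps)
  also have "\<dots> = 12 * \<rho> ^ 4 + 7 * (p\<^sup>2 - q\<^sup>2) * \<rho>\<^sup>2 - (p ^ 4 - 6 * p\<^sup>2 * q\<^sup>2 + q ^ 4)"
  proof -
    have \<rho>4: "\<rho> ^ 4 = (p\<^sup>2 + q\<^sup>2)\<^sup>2" unfolding \<rho>2[symmetric] by simp
    have P4: "P ^ 4 = (p\<^sup>2)\<^sup>2" unfolding P2[symmetric] by simp
    show ?thesis
      unfolding \<rho>4 P4 \<rho>2 P2 by (simp add: power2_eq_square power4_eq_xxxx algebra_simps)
  qed
  also have "\<dots> = 12 * \<rho> ^ 4 + 7 * Re (z\<^sup>2) * \<rho>\<^sup>2 - Re (z ^ 4)"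
    by (simp add: z power2_eq_square power4_eq_xxxx algebra_simps)
  finally have "18 * \<bar>Re z\<bar> * \<rho> ^ 3 \<le> 12 * \<rho> ^ 4 + 7 * Re (z\<^sup>2) * \<rho>\<^sup>2 - Re (z ^ 4)"
    by (simp add: P_def z)
  then have "\<bar>Re z\<bar> \<le> (12 * \<rho> ^ 4 + 7 * Re (z\<^sup>2) * \<rho>\<^sup>2 - Re (z ^ 4)) / (18 * \<rho> ^ 3)"
    using \<rho>_pos by (simp add: pos_le_divide_eq mult_ac)
  also have "\<dots> = 2/3 * \<rho> + 7/18 * Re (z\<^sup>2) / \<rho> - 1/18 * Re (z ^ 4) / \<rho> ^ 3"
    using \<rho>_pos by (simp add: divide_simps power2_eq_square power3_eq_cube power4_eq_xxxx)
      (simp add: algebra_simps)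
  finally show ?thesis unfolding \<rho>_def .
qed simp

lemma sum_Re_mult_cnj:
  fixes f :: "'a \<Rightarrow> complex"
  shows "(\<Sum>i\<in>I. \<Sum>j\<in>I. Re (f i * cnj (f j))) = (cmod (\<Sum>i\<in>I. f i))\<^sup>2"
proof -
  have "(\<Sum>i\<in>I. \<Sum>j\<in>I. Re (f i * cnj (f j))) = Re ((\<Sum>i\<in>I. f i) * cnj (\<Sum>i\<in>I. f i))"
    by (simp add: sum_product cnj_sum)
  also have "\<dots> = (cmod (\<Sum>i\<in>I. f i))\<^sup>2"
    by (simp only: complex_norm_square[symmetric] Re_complex_of_real)
  finally show ?thesis .
qed

lemma sum_abs_Re_mult_cnj_le:
  fixes w :: "'a \<Rightarrow> complex"
  shows "(\<Sum>i\<in>I. \<Sum>j\<in>I. \<bar>Re (w i * cnj (w j))\<bar>)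
    \<le> 2/3 * (\<Sum>i\<in>I. cmod (w i))\<^sup>2 + 7/18 * (cmod (\<Sum>i\<in>I. w i ^ 2 / of_real (cmod (w i))))\<^sup>2"
proof -
  define r where "r i = cmod (w i)" for i
  (* a i = b i = 0 when w i = 0, since x / 0 = 0; so no case split is needed below. *)
  define a where "a i = w i ^ 2 / of_real (r i)" for i
  define b where "b i = w i ^ 4 / of_real (r i ^ 3)" for i
  have pointwise: "\<bar>Re (w i * cnj (w j))\<bar>
      \<le> 2/3 * (r i * r j) + 7/18 * Re (a i * cnj (a j)) - 1/18 * Re (b i * cnj (b j))" for i j
  proof -
    define z where "z = w i * cnj (w j)"
    have "cmod z = r i * r j" and "a i * cnj (a j) = z\<^sup>2 / of_real (cmod z)"
      and "b i * cnj (b j) = z ^ 4 / of_real (cmod z ^ 3)"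
      by (simp_all add: z_def r_def a_def b_def norm_mult power_mult_distrib)
    then show ?thesis
      using abs_Re_le_trigonometric_majorant[of z] by (simp add: z_def Re_divide_of_real)
  qed
  have "(\<Sum>i\<in>I. \<Sum>j\<in>I. \<bar>Re (w i * cnj (w j))\<bar>)
      \<le> (\<Sum>i\<in>I. \<Sum>j\<in>I. 2/3 * (r i * r j) + 7/18 * Re (a i * cnj (a j)) - 1/18 * Re (b i * cnj (b j)))"
    by (intro sum_mono pointwise)
  also have "\<dots> = 2/3 * (\<Sum>i\<in>I. r i)\<^sup>2 + 7/18 * (cmod (\<Sum>i\<in>I. a i))\<^sup>2
      - 1/18 * (cmod (\<Sum>i\<in>I. b i))\<^sup>2"
    by (simp only: sum.distrib sum_subtractf sum_distrib_left[symmetric] sum_Re_mult_cnj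
        sum_product[symmetric] power2_eq_square) (simp add: sum_distrib_right)
  also have "\<dots> \<le> 2/3 * (\<Sum>i\<in>I. r i)\<^sup>2 + 7/18 * (cmod (\<Sum>i\<in>I. a i))\<^sup>2"
    by simp
  finally show ?thesis by (simp only: r_def a_def)
qed

lemma Re_cnj_sgn_mult_self: "Re (cnj (sgn z) * z) = cmod z"
proof (cases "z = 0")
  case False
  have "cnj (sgn z) * z = z * cnj z / of_real (cmod z)"
    by (simp add: sgn_eq mult.commute)
  also have "z * cnj z = of_real ((cmod z)\<^sup>2)"
    by (rule complex_norm_square[symmetric])
  finally have "cnj (sgn z) * z = of_real ((cmod z)\<^sup>2 / cmod z)"
    by simp
  then show ?thesis using False by (simp add: power2_eq_square)
qed simp

lemma sum_norm_square_add_le: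
  fixes w :: "'a \<Rightarrow> complex"
  assumes "(\<Sum>i\<in>I. w i ^ 2) = 0"
  shows "(\<Sum>i\<in>I. cmod (w i))\<^sup>2 + (cmod (\<Sum>i\<in>I. w i ^ 2 / of_real (cmod (w i))))\<^sup>2
    \<le> card I * (\<Sum>i\<in>I. (cmod (w i))\<^sup>2)"
proof -
  define S where "S = (\<Sum>i\<in>I. w i ^ 2 / of_real (cmod (w i)))"
  (* Rotating by sgn S makes the sum S real; p i is the cosine of the angle between w i ^ 2 and S. *)
  define p where "p i = Re (cnj (sgn S) * w i ^ 2) / (cmod (w i))\<^sup>2" for i
  have p_le: "\<bar>p i\<bar> \<le> 1" for i
  proof -
    have "\<bar>Re (cnj (sgn S) * w i ^ 2)\<bar> \<le> cmod (cnj (sgn S) * w i ^ 2)"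
      by (rule abs_Re_le_cmod)
    also have "\<dots> \<le> (cmod (w i))\<^sup>2"
      by (cases "S = 0") (simp_all add: norm_mult norm_power norm_sgn)
    finally have "\<bar>Re (cnj (sgn S) * w i ^ 2)\<bar> \<le> (cmod (w i))\<^sup>2" .
    then show ?thesis by (simp add: p_def abs_divide divide_le_eq_1)
  qed
  have sum_weighted: "(\<Sum>i\<in>I. (cmod (w i))\<^sup>2 * p i) = Re (cnj (sgn S) * (\<Sum>i\<in>I. w i ^ 2))"
  proof -
    have "(cmod (w i))\<^sup>2 * p i = Re (cnj (sgn S) * w i ^ 2)" for i
      by (cases "w i = 0") (simp_all add: p_def)
    then show ?thesis by (simp only: sum_distrib_left Re_sum)
  qed
  have sum_rotated: "(\<Sum>i\<in>I. cmod (w i) * p i) = Re (cnj (sgn S) * S)"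
  proof -
    have "cmod (w i) * p i = Re (cnj (sgn S) * (w i ^ 2 / of_real (cmod (w i))))" for i
      by (cases "w i = 0") (simp_all add: p_def Re_divide_of_real power2_eq_square)
    then show ?thesis by (simp only: S_def sum_distrib_left Re_sum)
  qed
  have "(\<Sum>i\<in>I. cmod (w i))\<^sup>2 + (\<Sum>i\<in>I. cmod (w i) * p i)\<^sup>2
      \<le> card I * (\<Sum>i\<in>I. (cmod (w i))\<^sup>2)"
    by (rule sum_square_add_sum_square_le) (simp_all add: p_le sum_weighted assms)
  then show ?thesis
    unfolding sum_rotated Re_cnj_sgn_mult_self S_def .
qed

lemma sum_abs_inner_le:
  fixes x y :: "'a \<Rightarrow> real"
  assumes "(\<Sum>i\<in>I. (x i)\<^sup>2) = 1" and "(\<Sum>i\<in>I. (y i)\<^sup>2) = 1" and "(\<Sum>i\<in>I. x i * y i) = 0"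
  shows "(\<Sum>i\<in>I. \<Sum>j\<in>I. \<bar>x i * x j + y i * y j\<bar>) \<le> 4/3 * card I"
proof -
  define w where "w i = Complex (x i) (y i)" for i
  define R where "R = (\<Sum>i\<in>I. cmod (w i))"
  define S where "S = (\<Sum>i\<in>I. w i ^ 2 / of_real (cmod (w i)))"
  have "(\<Sum>i\<in>I. w i ^ 2) = 0"
    using assms by (simp add: complex_eq_iff w_def Re_sum Im_sum power2_eq_square sum_subtractf
        sum_distrib_left[symmetric])
  then have "R\<^sup>2 + (cmod S)\<^sup>2 \<le> card I * (\<Sum>i\<in>I. (cmod (w i))\<^sup>2)"
    unfolding R_def S_def by (rule sum_norm_square_add_le)
  also have "(\<Sum>i\<in>I. (cmod (w i))\<^sup>2) = 2"
    using assms by (simp add: w_def cmod_power2 sum.distrib)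
  finally have RS: "R\<^sup>2 + (cmod S)\<^sup>2 \<le> 2 * card I" by simp
  have "(\<Sum>i\<in>I. \<Sum>j\<in>I. \<bar>x i * x j + y i * y j\<bar>)
      = (\<Sum>i\<in>I. \<Sum>j\<in>I. \<bar>Re (w i * cnj (w j))\<bar>)"
    by (simp add: w_def)
  also have "\<dots> \<le> 2/3 * R\<^sup>2 + 7/18 * (cmod S)\<^sup>2"
    unfolding R_def S_def by (rule sum_abs_Re_mult_cnj_le)
  also have "\<dots> \<le> 4/3 * card I"
    using RS zero_le_power2[of "cmod S"] by linarith
  finally show ?thesis .
qed

lemma quadratic_forms_sum_ge:
  fixes M :: "'a \<Rightarrow> 'a \<Rightarrow> real" and x y :: "'a \<Rightarrow> real"
  assumes "\<And>i j. i \<in> I \<Longrightarrow> j \<in> I \<Longrightarrow> 0 \<le> M i j"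
    and "\<And>i j. i \<in> I \<Longrightarrow> j \<in> I \<Longrightarrow> M i j \<le> 1"
    and "(\<Sum>i\<in>I. (x i)\<^sup>2) = 1" and "(\<Sum>i\<in>I. (y i)\<^sup>2) = 1" and "(\<Sum>i\<in>I. x i * y i) = 0"
  shows "- 2/3 * card I
    \<le> (\<Sum>i\<in>I. \<Sum>j\<in>I. M i j * (x i * x j)) + (\<Sum>i\<in>I. \<Sum>j\<in>I. M i j * (y i * y j))"
proof -
  define t where "t i j = x i * x j + y i * y j" for i j
  have "(t i j - \<bar>t i j\<bar>) / 2 \<le> M i j * t i j" if "i \<in> I" "j \<in> I" for i j
    using assms(1,2)[OF that] mult_left_le_one_le[of "- t i j" "M i j"] by (cases "0 \<le> t i j") auto
  then have "(\<Sum>i\<in>I. \<Sum>j\<in>I. (t i j - \<bar>t i j\<bar>) / 2) \<le> (\<Sum>i\<in>I. \<Sum>j\<in>I. M i j * t i j)"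
    by (intro sum_mono) auto
  moreover have "2 * (\<Sum>i\<in>I. \<Sum>j\<in>I. (t i j - \<bar>t i j\<bar>) / 2)
      = (\<Sum>i\<in>I. \<Sum>j\<in>I. t i j) - (\<Sum>i\<in>I. \<Sum>j\<in>I. \<bar>t i j\<bar>)"
    by (simp add: sum_divide_distrib[symmetric] sum_subtractf)
  moreover have "(\<Sum>i\<in>I. \<Sum>j\<in>I. t i j) = (\<Sum>i\<in>I. x i)\<^sup>2 + (\<Sum>i\<in>I. y i)\<^sup>2"
    by (simp add: t_def sum.distrib power2_eq_square sum_product)
  moreover have "(\<Sum>i\<in>I. \<Sum>j\<in>I. \<bar>t i j\<bar>) \<le> 4/3 * card I"
    unfolding t_def using assms(3-5) by (rule sum_abs_inner_le)
  ultimately have "- 2/3 * card I \<le> (\<Sum>i\<in>I. \<Sum>j\<in>I. M i j * t i j)"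
    using zero_le_power2[of "sum x I"] zero_le_power2[of "sum y I"] by linarith
  then show ?thesis
    by (simp add: t_def distrib_left sum.distrib)
qed

lemma index_mult_mat_sum:
  fixes A B :: "'a :: comm_semiring_0 mat"
  assumes "A \<in> carrier_mat n m" "B \<in> carrier_mat m p" "i < n" "j < p"
  shows "(A * B) $$ (i, j) = (\<Sum>k<m. A $$ (i, k) * B $$ (k, j))"
  using assms by (auto simp: scalar_prod_def lessThan_atLeast0 intro!: sum.cong)

lemma schur_first_two_columns:
  fixes A :: "real mat"
  assumes A: "A \<in> carrier_mat n n" and n: "2 \<le> n"
    and char_poly: "char_poly A = (\<Prod>e\<leftarrow>es. [:- e, 1:])"
  obtains X Y :: "nat \<Rightarrow> real" and \<gamma> :: real
  where "\<And>i. i < n \<Longrightarrow> (\<Sum>k<n. A $$ (i, k) * X k) = es ! 0 * X i"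
    and "\<And>i. i < n \<Longrightarrow> (\<Sum>k<n. A $$ (i, k) * Y k) = \<gamma> * X i + es ! 1 * Y i"
    and "\<exists>i<n. X i \<noteq> 0" and "\<And>c. \<exists>i<n. Y i \<noteq> c * X i"
proof -
  obtain B P Q where "schur_decomposition A es = (B, P, Q)"
    by (cases "schur_decomposition A es") auto
  from schur_decomposition[OF A char_poly this]
  have sim: "similar_mat_wit A B P Q" and B_ut: "upper_triangular B" and B_diag: "diag_mat B = es"
    by auto
  from similar_mat_witD2[OF A sim]
  have B: "B \<in> carrier_mat n n" and P: "P \<in> carrier_mat n n" and Q: "Q \<in> carrier_mat n n"
    and QP: "Q * P = 1\<^sub>m n" and A_eq: "A = P * B * Q"
    by auto
  have AP: "A * P = P * B"
    using A_eq QP assoc_mult_mat[OF P B Q] assoc_mult_mat[OF P mult_carrier_mat[OF B Q] P]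
      assoc_mult_mat[OF B Q P] P B by simp
  have B_low: "B $$ (k, j) = 0" if "j < k" "k < n" for j k
    using B_ut that B by (auto intro: upper_triangularD)
  have B_diag_01: "B $$ (0, 0) = es ! 0" "B $$ (1, 1) = es ! 1"
    using B_diag B n by (auto simp: diag_mat_def)
  have AP_entry: "(\<Sum>k<n. A $$ (i, k) * P $$ (k, j)) = (\<Sum>k<n. P $$ (i, k) * B $$ (k, j))"
    if "i < n" "j < n" for i j
    using index_mult_mat_sum[OF A P that] index_mult_mat_sum[OF P B that] AP by simp
  have QP_entry: "(\<Sum>k<n. Q $$ (i, k) * P $$ (k, j)) = (if i = j then 1 else 0)"
    if "i < n" "j < n" for i j
    using index_mult_mat_sum[OF Q P that] QP that by simp
  define X where "X k = P $$ (k, 0)" for k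
  define Y where "Y k = P $$ (k, 1)" for k
  show ?thesis
  proof
    fix i assume i: "i < n"
    have "(\<Sum>k<n. A $$ (i, k) * X k) = (\<Sum>k<n. P $$ (i, k) * B $$ (k, 0))"
      using AP_entry[OF i] n by (simp add: X_def)
    also have "\<dots> = (\<Sum>k<n. if k = 0 then P $$ (i, 0) * B $$ (0, 0) else 0)"
      by (intro sum.cong) (auto simp: B_low)
    finally show "(\<Sum>k<n. A $$ (i, k) * X k) = es ! 0 * X i"
      using n B_diag_01 by (simp add: X_def)
  next
    fix i assume i: "i < n"
    have "(\<Sum>k<n. A $$ (i, k) * Y k) = (\<Sum>k<n. P $$ (i, k) * B $$ (k, 1))"
      using AP_entry[OF i] n by (simp add: Y_def)
    also have "\<dots> = (\<Sum>k<n. (if k = 0 then P $$ (i, 0) * B $$ (0, 1) else 0)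
        + (if k = 1 then P $$ (i, 1) * B $$ (1, 1) else 0))"
      by (intro sum.cong) (auto simp: B_low)
    finally show "(\<Sum>k<n. A $$ (i, k) * Y k) = B $$ (0, 1) * X i + es ! 1 * Y i"
      using n B_diag_01 by (simp add: sum.distrib X_def Y_def)
  next
    show "\<exists>i<n. X i \<noteq> 0"
    proof (rule ccontr)
      assume "\<not> (\<exists>i<n. X i \<noteq> 0)"
      then have "(\<Sum>k<n. Q $$ (0, k) * P $$ (k, 0)) = 0"
        by (simp add: X_def)
      then show False
        using QP_entry[of 0 0] n by simp
    qed
  next
    fix c
    show "\<exists>i<n. Y i \<noteq> c * X i"
    proof (rule ccontr)
      assume "\<not> (\<exists>i<n. Y i \<noteq> c * X i)"
      then have "(\<Sum>k<n. Q $$ (1, k) * P $$ (k, 1)) = c * (\<Sum>k<n. Q $$ (1, k) * P $$ (k, 0))"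
        by (simp add: X_def Y_def sum_distrib_left ac_simps)
      then show False
        using QP_entry[of 1 1] QP_entry[of 1 0] n by simp
    qed
  qed
qed

lemma quadratic_form_eq_of_orthogonal_defect:
  fixes M :: "'a \<Rightarrow> 'a \<Rightarrow> real"
  assumes "\<And>i. i \<in> I \<Longrightarrow> (\<Sum>k\<in>I. M i k * v k) = \<alpha> * v i + \<delta> * u i"
    and "(\<Sum>i\<in>I. (v i)\<^sup>2) = 1" and "(\<Sum>i\<in>I. u i * v i) = 0"
  shows "(\<Sum>i\<in>I. \<Sum>j\<in>I. M i j * (v i * v j)) = \<alpha>"
proof -
  have "(\<Sum>i\<in>I. \<Sum>j\<in>I. M i j * (v i * v j)) = (\<Sum>i\<in>I. v i * (\<Sum>k\<in>I. M i k * v k))"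
    by (simp add: sum_distrib_left ac_simps)
  also have "\<dots> = \<alpha> * (\<Sum>i\<in>I. (v i)\<^sup>2) + \<delta> * (\<Sum>i\<in>I. u i * v i)"
    using assms(1) by (simp add: sum.distrib sum_distrib_left power2_eq_square algebra_simps)
  finally show ?thesis
    using assms(2,3) by simp
qed

lemma orthonormal_pair_of_triangular_pair:
  fixes M :: "'a \<Rightarrow> 'a \<Rightarrow> real"
  assumes "finite I"
    and MX: "\<And>i. i \<in> I \<Longrightarrow> (\<Sum>k\<in>I. M i k * X k) = \<beta> * X i"
    and MY: "\<And>i. i \<in> I \<Longrightarrow> (\<Sum>k\<in>I. M i k * Y k) = \<gamma> * X i + \<alpha> * Y i"
    and "\<exists>i\<in>I. X i \<noteq> 0" and "\<And>c. \<exists>i\<in>I. Y i \<noteq> c * X i"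
  obtains x y :: "'a \<Rightarrow> real"
  where "(\<Sum>i\<in>I. (x i)\<^sup>2) = 1" and "(\<Sum>i\<in>I. (y i)\<^sup>2) = 1" and "(\<Sum>i\<in>I. x i * y i) = 0"
    and "(\<Sum>i\<in>I. \<Sum>j\<in>I. M i j * (x i * x j)) = \<beta>"
    and "(\<Sum>i\<in>I. \<Sum>j\<in>I. M i j * (y i * y j)) = \<alpha>"
proof -
  have pos_if_nonzero: "0 < (\<Sum>i\<in>I. (f i)\<^sup>2)" if "\<exists>i\<in>I. f i \<noteq> 0" for f :: "'a \<Rightarrow> real"
    using that \<open>finite I\<close> by (auto intro: sum_pos2)
  define nX where "nX = (\<Sum>i\<in>I. (X i)\<^sup>2)"
  define c where "c = (\<Sum>i\<in>I. X i * Y i) / nX"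
  define V where "V i = Y i - c * X i" for i
  define nV where "nV = (\<Sum>i\<in>I. (V i)\<^sup>2)"
  have nX: "0 < nX"
    unfolding nX_def using assms(4) by (rule pos_if_nonzero)
  have nV: "0 < nV"
    unfolding nV_def using assms(5)[of c] by (intro pos_if_nonzero) (auto simp: V_def)
  have "(\<Sum>i\<in>I. X i * V i) = (\<Sum>i\<in>I. X i * Y i) - c * nX"
    by (simp add: V_def nX_def algebra_simps sum_subtractf sum_distrib_left power2_eq_square)
  then have XV: "(\<Sum>i\<in>I. X i * V i) = 0"
    using nX by (simp add: c_def)
  have MV: "(\<Sum>k\<in>I. M i k * V k) = \<alpha> * V i + (\<gamma> + c * \<alpha> - c * \<beta>) * X i" if "i \<in> I" for i
    using MX[OF that] MY[OF that]
    by (simp add: V_def algebra_simps sum_subtractf sum_distrib_left[symmetric])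
  define x where "x i = X i / sqrt nX" for i
  define y where "y i = V i / sqrt nV" for i
  show ?thesis
  proof
    show x: "(\<Sum>i\<in>I. (x i)\<^sup>2) = 1"
      using nX by (simp add: x_def power_divide sum_divide_distrib[symmetric] nX_def[symmetric])
    show y: "(\<Sum>i\<in>I. (y i)\<^sup>2) = 1"
      using nV by (simp add: y_def power_divide sum_divide_distrib[symmetric] nV_def[symmetric])
    show "(\<Sum>i\<in>I. x i * y i) = 0"
      using XV by (simp add: x_def y_def sum_divide_distrib[symmetric])
    show "(\<Sum>i\<in>I. \<Sum>j\<in>I. M i j * (x i * x j)) = \<beta>"
    proof (rule quadratic_form_eq_of_orthogonal_defect[where u = "\<lambda>_. 0"])
      show "(\<Sum>k\<in>I. M i k * x k) = \<beta> * x i + 0 * 0" if "i \<in> I" for i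
        using MX[OF that] by (simp add: x_def sum_divide_distrib[symmetric] mult.assoc[symmetric])
    qed (simp_all add: x)
    show "(\<Sum>i\<in>I. \<Sum>j\<in>I. M i j * (y i * y j)) = \<alpha>"
    proof (rule quadratic_form_eq_of_orthogonal_defect[where u = X])
      show "(\<Sum>k\<in>I. M i k * y k) = \<alpha> * y i + (\<gamma> + c * \<alpha> - c * \<beta>) / sqrt nV * X i"
        if "i \<in> I" for i
        using MV[OF that] by (simp add: y_def sum_divide_distrib[symmetric] mult.assoc[symmetric]
            add_divide_distrib)
      show "(\<Sum>i\<in>I. X i * y i) = 0"
        using XV by (simp add: y_def sum_divide_distrib[symmetric])
    qed (simp add: y)
  qed
qed

lemma char_poly_two_roots_sum_ge:
  fixes A :: "real mat"
  assumes A: "A \<in> carrier_mat n n" and n: "2 \<le> n"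
    and char_poly: "char_poly A = (\<Prod>e\<leftarrow>es. [:- e, 1:])"
    and entries: "\<And>i j. i < n \<Longrightarrow> j < n \<Longrightarrow> A $$ (i, j) \<in> {0..1}"
  shows "- 2/3 * n \<le> es ! 0 + es ! 1"
proof -
  obtain X Y \<gamma> where
    eigen: "\<And>i. i < n \<Longrightarrow> (\<Sum>k<n. A $$ (i, k) * X k) = es ! 0 * X i"
    and defect: "\<And>i. i < n \<Longrightarrow> (\<Sum>k<n. A $$ (i, k) * Y k) = \<gamma> * X i + es ! 1 * Y i"
    and X_nonzero: "\<exists>i<n. X i \<noteq> 0" and Y_independent: "\<And>c. \<exists>i<n. Y i \<noteq> c * X i"
    using schur_first_two_columns[OF A n char_poly] by blast
  obtain x y where orthonormal:
    "(\<Sum>i<n. (x i)\<^sup>2) = 1" "(\<Sum>i<n. (y i)\<^sup>2) = 1" "(\<Sum>i<n. x i * y i) = 0"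
    and "(\<Sum>i<n. \<Sum>j<n. A $$ (i, j) * (x i * x j)) = es ! 0"
    and "(\<Sum>i<n. \<Sum>j<n. A $$ (i, j) * (y i * y j)) = es ! 1"
    by (rule orthonormal_pair_of_triangular_pair[of "{..<n}" "\<lambda>i j. A $$ (i, j)" X "es ! 0" Y \<gamma> "es ! 1"])
      (simp_all add: eigen defect X_nonzero Y_independent Bex_def)
  moreover have "- 2/3 * card {..<n} \<le> (\<Sum>i<n. \<Sum>j<n. A $$ (i, j) * (x i * x j))
      + (\<Sum>i<n. \<Sum>j<n. A $$ (i, j) * (y i * y j))"
    using entries orthonormal by (intro quadratic_forms_sum_ge) auto
  ultimately show ?thesis
    by simp
qed

theorem corollary2p2:
  fixes n :: nat and E :: "nat \<Rightarrow> nat \<Rightarrow> bool" and es :: "real list"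
  assumes "n \<ge> 2"
    and "simple_graph n E"
    and "ordered_eigenvalues (adj_matrix n E) es"
  shows "es ! (n - 2) \<ge> - (real n / 3)"
proof -
  define A where "A = adj_matrix n E"
  have A: "A \<in> carrier_mat n n"
    and entries: "\<And>i j. i < n \<Longrightarrow> j < n \<Longrightarrow> A $$ (i, j) \<in> {0..1}"
    by (auto simp: A_def adj_matrix_def)
  from assms(3) have len: "length es = n" and sorted: "sorted_wrt (\<ge>) es"
    and "char_poly A = (\<Prod>e\<leftarrow>es. [:- e, 1:])"
    using A unfolding ordered_eigenvalues_def A_def by auto
  then have "char_poly A = (\<Prod>e\<leftarrow>rev es. [:- e, 1:])"
    by (simp add: rev_map[symmetric])
  then have "- 2/3 * n \<le> rev es ! 0 + rev es ! 1"
    by (rule char_poly_two_roots_sum_ge[OF A assms(1)]) (fact entries)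
  moreover have "rev es ! 0 = es ! (n - 1)" and "rev es ! 1 = es ! (n - 2)"
    using assms(1) len by (simp_all add: rev_nth numeral_2_eq_2)
  moreover have "es ! (n - 1) \<le> es ! (n - 2)"
    using sorted_wrt_nth_less[OF sorted, of "n - 2" "n - 1"] assms(1) len by simp
  ultimately show ?thesis
    by linarith
qed

end
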